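(* Let $d\ge1$ and let $P$ be a probability distribution on $\{0,1\}^d$ with $P(\nu)>0$ for all $\nu\in\{0,1\}^d$. Fix $\omega\in\{0,1\}^d$. Let $A_\omega$ be the $(2^d-1)\times d$ binary matrix with rows indexed by $\nu\in\{0,1\}^d\setminus\{\omega\}$ and entries $A_\omega(\nu,i):=1$ if $\nu_i\ne\omega_i$ and $0$ otherwise, and let $b_\omega$ be the vector indexed by $\nu\in\{0,1\}^d\setminus\{\omega\}$ with $b_\omega(\nu):=\ln(P(\nu)/P(\omega))$. Then, under the bijection $q\mapsto y$, $y_i=(1-2\omega_i)\ln\left(\frac{q_i}{1-q_i}\right)$, from $(0,1)^d$ onto $\mathbb{R}^d$, the set $\mathcal{Q}_\omega\cap(0,1)^d$ corresponds exactly to the set of $y\in\mathbb{R}^d$ satisfying the coordinatewise inequalities $A_\omega y\le b_\omega$.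
   Context: For $\omega\in\{0,1\}^d$ and $q\in[0,1]^d$, $f_\omega(q):=\prod_{i=1}^d q_i^{-\omega_i}(1-q_i)^{\omega_i-1}\in\mathbb{R}\cup\{+\infty\}$ (with $0^0=1$, $1/0=+\infty$), and $\mathcal{Q}_\omega:=\{q\in[0,1]^d\mid \forall\nu\in\{0,1\}^d:\ P(\omega)f_\omega(q)\le P(\nu)f_\nu(q)\}$. *)

theory Defs
  imports "HOL-Analysis.Analysis"
begin

text \<open>The index set {1..d} is rendered as a finite type 'd (so d = CARD('d) \<ge> 1).
  Points of {0,1}^d and of [0,1]^d, R^d are functions 'd \<Rightarrow> real.\<close>

definition cube :: "('d::finite \<Rightarrow> real) set" where
  "cube = {w. \<forall>i. w i \<in> {0,1}}"

definition unit_box :: "('d::finite \<Rightarrow> real) set" where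
  "unit_box = {q. \<forall>i. 0 \<le> q i \<and> q i \<le> 1}"

definition open_unit_box :: "('d::finite \<Rightarrow> real) set" where
  "open_unit_box = {q. \<forall>i. 0 < q i \<and> q i < 1}"

text \<open>One factor q_i^{-w_i} (1-q_i)^{w_i-1}, with 0^0 = 1 and 1/0 = +\<infinity>.\<close>
definition f_factor :: "real \<Rightarrow> real \<Rightarrow> ereal" where
  "f_factor wi qi =
     (if wi = 1 then (if qi = 0 then \<infinity> else ereal (1 / qi))
      else (if qi = 1 then \<infinity> else ereal (1 / (1 - qi))))"

definition f_omega :: "('d::finite \<Rightarrow> real) \<Rightarrow> ('d \<Rightarrow> real) \<Rightarrow> ereal" where
  "f_omega w q = (\<Prod>i\<in>UNIV. f_factor (w i) (q i))"

definition Q_omega :: "(('d::finite \<Rightarrow> real) \<Rightarrow> real) \<Rightarrow> ('d \<Rightarrow> real) \<Rightarrow> ('d \<Rightarrow> real) set" where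
  "Q_omega P w = {q \<in> unit_box. \<forall>\<nu>\<in>cube.
      ereal (P w) * f_omega w q \<le> ereal (P \<nu>) * f_omega \<nu> q}"

definition A_omega :: "('d::finite \<Rightarrow> real) \<Rightarrow> ('d \<Rightarrow> real) \<Rightarrow> 'd \<Rightarrow> real" where
  "A_omega w \<nu> i = (if \<nu> i \<noteq> w i then 1 else 0)"

definition b_omega :: "(('d::finite \<Rightarrow> real) \<Rightarrow> real) \<Rightarrow> ('d \<Rightarrow> real) \<Rightarrow> ('d \<Rightarrow> real) \<Rightarrow> real" where
  "b_omega P w \<nu> = ln (P \<nu> / P w)"

definition logit_map :: "('d::finite \<Rightarrow> real) \<Rightarrow> ('d \<Rightarrow> real) \<Rightarrow> ('d \<Rightarrow> real)" where
  "logit_map w q = (\<lambda>i. (1 - 2 * w i) * ln (q i / (1 - q i)))"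

end

theory Submission
  imports Defs
begin

text \<open>On the open box every factor of \<open>f_\<nu>(q)\<close> is finite, and changing \<open>\<nu>\<^sub>i\<close> away from
  \<open>\<omega>\<^sub>i\<close> multiplies it by the odds \<open>q\<^sub>i/(1-q\<^sub>i)\<close> or its inverse, i.e. by \<open>exp (-y\<^sub>i)\<close> with
  \<open>y = logit_map \<omega> q\<close>. Hence \<open>f_\<nu>(q) = f_\<omega>(q) exp (-(A\<^sub>\<omega> y)\<^sub>\<nu>)\<close>, and after dividing by
  \<open>P(\<omega>) f_\<omega>(q) > 0\<close> and taking logarithms the defining inequality of \<open>\<Q>\<^sub>\<omega>\<close> for \<open>\<nu>\<close> becomes
  \<open>(A\<^sub>\<omega> y)\<^sub>\<nu> \<le> b\<^sub>\<omega>(\<nu>)\<close>. The logit map is a bijection because the sign factor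
  \<open>1 - 2\<omega>\<^sub>i = \<plusminus>1\<close> squares to \<open>1\<close> and the logistic function inverts \<open>ln (x/(1-x))\<close>.\<close>

definition logit :: "real \<Rightarrow> real" where
  "logit x = ln (x / (1 - x))"

definition logistic :: "real \<Rightarrow> real" where
  "logistic z = exp z / (1 + exp z)"

lemma logistic_bounds: "0 < logistic z" "logistic z < 1"
  by (simp_all add: logistic_def add_pos_pos)

lemma logit_logistic [simp]: "logit (logistic z) = z"
proof -
  have pos: "0 < 1 + exp z"
    by (simp add: add_pos_pos)
  then have "1 - logistic z = 1 / (1 + exp z)"
    by (simp add: logistic_def field_simps)
  with pos show ?thesis
    by (simp add: logit_def logistic_def)
qed

lemma logistic_logit:
  assumes "0 < x" "x < 1"
  shows "logistic (logit x) = x"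
  using assms by (simp add: logistic_def logit_def field_simps)

lemma logit_map_eq: "logit_map w q i = (1 - 2 * w i) * logit (q i)"
  by (simp add: logit_map_def logit_def)

lemma sign_factor_square:
  assumes "w \<in> cube"
  shows "(1 - 2 * w i) * (1 - 2 * w i) = 1"
proof -
  have "w i = 0 \<or> w i = 1"
    using assms by (auto simp: cube_def)
  then show ?thesis
    by auto
qed

lemma bij_betw_logit_map:
  assumes w: "w \<in> cube"
  shows "bij_betw (logit_map w) open_unit_box UNIV"
proof (rule bij_betw_byWitness)
  let ?inv = "\<lambda>y i. logistic ((1 - 2 * w i) * y i)"
  show "\<forall>q\<in>open_unit_box. ?inv (logit_map w q) = q"
    by (auto simp: logit_map_eq mult.assoc[symmetric] sign_factor_square[OF w]
        logistic_logit open_unit_box_def)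
  show "\<forall>y\<in>UNIV. logit_map w (?inv y) = y"
    by (auto simp: logit_map_eq mult.assoc[symmetric] sign_factor_square[OF w])
  show "?inv ` UNIV \<subseteq> open_unit_box"
    by (auto simp: open_unit_box_def logistic_bounds)
qed simp

definition inv_likelihood :: "real \<Rightarrow> real \<Rightarrow> real" where
  "inv_likelihood wi qi = (if wi = 1 then 1 / qi else 1 / (1 - qi))"

lemma inv_likelihood_pos: "0 < qi \<Longrightarrow> qi < 1 \<Longrightarrow> 0 < inv_likelihood wi qi"
  by (simp add: inv_likelihood_def)

lemma f_omega_open_unit_box:
  assumes "q \<in> open_unit_box"
  shows "f_omega v q = ereal (\<Prod>i\<in>UNIV. inv_likelihood (v i) (q i))"
proof -
  have "f_factor (v i) (q i) = ereal (inv_likelihood (v i) (q i))" for i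
  proof -
    have "0 < q i" "q i < 1"
      using assms by (auto simp: open_unit_box_def)
    then show ?thesis
      by (simp add: f_factor_def inv_likelihood_def)
  qed
  then show ?thesis
    by (simp add: f_omega_def prod_ereal)
qed

lemma inv_likelihood_flip:
  assumes "wi \<in> {0, 1}" "vi \<in> {0, 1}" "0 < qi" "qi < 1"
  shows "inv_likelihood vi qi =
    inv_likelihood wi qi * exp (- ((if vi \<noteq> wi then 1 else 0) * ((1 - 2 * wi) * logit qi)))"
proof -
  have "exp (logit qi) = qi / (1 - qi)" "exp (- logit qi) = (1 - qi) / qi"
    using assms by (simp_all add: logit_def exp_minus)
  with assms show ?thesis
    by (auto simp: inv_likelihood_def field_simps)
qed

lemma prod_inv_likelihood_ratio:
  assumes q: "q \<in> open_unit_box" and w: "w \<in> cube" and v: "v \<in> cube"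
  shows "(\<Prod>i\<in>UNIV. inv_likelihood (v i) (q i)) =
    (\<Prod>i\<in>UNIV. inv_likelihood (w i) (q i)) * exp (- (\<Sum>i\<in>UNIV. A_omega w v i * logit_map w q i))"
proof -
  have "inv_likelihood (v i) (q i) =
      inv_likelihood (w i) (q i) * exp (- (A_omega w v i * logit_map w q i))" for i
    using inv_likelihood_flip[of "w i" "v i" "q i"] q w v
    by (simp add: open_unit_box_def cube_def A_omega_def logit_map_eq)
  then show ?thesis
    by (simp add: prod.distrib exp_sum[symmetric] sum_negf)
qed

lemma weighted_f_omega_le_iff:
  assumes q: "q \<in> open_unit_box" and w: "w \<in> cube" and v: "v \<in> cube"
    and Pw: "0 < P w" and Pv: "0 < P v"
  shows "ereal (P w) * f_omega w q \<le> ereal (P v) * f_omega v q \<longleftrightarrow>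
    (\<Sum>i\<in>UNIV. A_omega w v i * logit_map w q i) \<le> b_omega P w v"
proof -
  define S where "S = (\<Sum>i\<in>UNIV. A_omega w v i * logit_map w q i)"
  define F where "F = (\<Prod>i\<in>UNIV. inv_likelihood (w i) (q i))"
  have "0 < F"
    using q by (auto simp: F_def open_unit_box_def intro!: prod_pos inv_likelihood_pos)
  have "ereal (P w) * f_omega w q \<le> ereal (P v) * f_omega v q \<longleftrightarrow> P w * F \<le> P v * (F * exp (- S))"
    using prod_inv_likelihood_ratio[OF q w v] by (simp add: f_omega_open_unit_box[OF q] F_def S_def)
  also have "\<dots> \<longleftrightarrow> P w \<le> P v * exp (- S)"
    using \<open>0 < F\<close> by (simp add: mult.commute mult.left_commute)
  also have "\<dots> \<longleftrightarrow> ln (P w) \<le> ln (P v) - S"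
    using Pw Pv by (simp add: ln_mult flip: ln_le_cancel_iff)
  also have "\<dots> \<longleftrightarrow> S \<le> ln (P v / P w)"
    using Pw Pv by (auto simp: ln_div)
  finally show ?thesis
    by (simp add: S_def b_omega_def)
qed

lemma Q_omega_open_unit_box_iff:
  assumes q: "q \<in> open_unit_box" and w: "w \<in> cube" and Ppos: "\<forall>\<nu>\<in>cube. 0 < P \<nu>"
  shows "q \<in> Q_omega P w \<longleftrightarrow>
    (\<forall>\<nu>\<in>cube - {w}. (\<Sum>i\<in>UNIV. A_omega w \<nu> i * logit_map w q i) \<le> b_omega P w \<nu>)"
proof -
  have "q \<in> unit_box"
    using q by (auto simp: open_unit_box_def unit_box_def less_imp_le)
  then have "q \<in> Q_omega P w \<longleftrightarrow>
      (\<forall>\<nu>\<in>cube - {w}. ereal (P w) * f_omega w q \<le> ereal (P \<nu>) * f_omega \<nu> q)"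
    by (auto simp: Q_omega_def)
  then show ?thesis
    using weighted_f_omega_le_iff[OF q w] Ppos w by auto
qed

lemma image_Int_eq_if_preimage:
  assumes "f ` A = B" and "\<And>x. x \<in> A \<Longrightarrow> x \<in> S \<longleftrightarrow> f x \<in> T"
  shows "f ` (S \<inter> A) = T \<inter> B"
  using assms by blast

theorem corollary2:
  fixes P :: "('d::finite \<Rightarrow> real) \<Rightarrow> real" and w :: "'d \<Rightarrow> real"
  assumes Ppos: "\<forall>\<nu>\<in>cube. P \<nu> > 0"
    and Psum: "(\<Sum>\<nu>\<in>cube. P \<nu>) = 1"
    and w: "w \<in> cube"
  shows "bij_betw (logit_map w) open_unit_box UNIV \<and>
         logit_map w ` (Q_omega P w \<inter> open_unit_box) =
           {y. \<forall>\<nu>\<in>cube - {w}. (\<Sum>i\<in>UNIV. A_omega w \<nu> i * y i) \<le> b_omega P w \<nu>}"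
proof
  \<comment> \<open>Only positivity of \<open>P\<close> matters.\<close>
  show bij: "bij_betw (logit_map w) open_unit_box UNIV"
    using w by (rule bij_betw_logit_map)
  have "logit_map w ` open_unit_box = UNIV"
    using bij by (simp add: bij_betw_def)
  then have "logit_map w ` (Q_omega P w \<inter> open_unit_box) =
      {y. \<forall>\<nu>\<in>cube - {w}. (\<Sum>i\<in>UNIV. A_omega w \<nu> i * y i) \<le> b_omega P w \<nu>} \<inter> UNIV"
    by (rule image_Int_eq_if_preimage) (simp add: Q_omega_open_unit_box_iff w Ppos)
  then show "logit_map w ` (Q_omega P w \<inter> open_unit_box) =
      {y. \<forall>\<nu>\<in>cube - {w}. (\<Sum>i\<in>UNIV. A_omega w \<nu> i * y i) \<le> b_omega P w \<nu>}"
    by simp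
qed

end
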